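(* Let $r,s,t$ be nonzero reals and $\lambda=(\lambda_k)_{k\ge0}$ a strictly increasing sequence of positive reals with $\lambda_k\to\infty$. For $a=(a_n)\in\omega$ define the matrix $F^\lambda=(f^\lambda_{nk})$ by $$f^\lambda_{nk}=\begin{cases}\left(\dfrac{d_{nk}\lambda_k}{\lambda_k-\lambda_{k-1}}-\dfrac{d_{n,k+1}\lambda_k}{\lambda_{k+1}-\lambda_k}\right)a_n,&k<n,\\[2mm]\dfrac1r\dfrac{\lambda_n}{\lambda_n-\lambda_{n-1}}a_n,&k=n,\\[2mm]0,&k>n,\end{cases}$$ and let $f_1^\lambda=\{a\in\omega:\sup_{K\in\mathcal F}\sum_n|\sum_{k\in K}f^\lambda_{nk}|<\infty\}$ and, for $1<q<\infty$, $f_6^\lambda=\{a\in\omega:\sup_{N\in\mathcal F}\sum_{k=0}^\infty|\sum_{n\in N}f^\lambda_{nk}|^q<\infty\}$. Then (i) $\{c_0^\lambda(\widehat B)\}^\alpha=\{c^\lambda(\widehat B)\}^\alpha=\{\ell_\infty^\lambda(\widehat B)\}^\alpha=f_1^\lambda$; (ii) if $1<p<\infty$ and $\frac1p+\frac1q=1$, then $\{\ell_p^\lambda(\widehat B)\}^\alpha=f_6^\lambda$.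
   Context: $\omega$: all complex sequences indexed by $\mathbb{N}=\{0,1,\dots\}$; $\mathcal F$: the collection of finite subsets of $\mathbb{N}$. Convention: terms with negative subscript are $0$. $D=(d_{nk})$ is the inverse of the lower triangular matrix $B(r,s,t)$ having $r$ on the diagonal, $s$ on the first subdiagonal, $t$ on the second subdiagonal and zeros elsewhere; explicitly $d_{nk}=\frac1r\sum_{v=0}^{n-k}\rho_1^{\,n-k-v}\rho_2^{\,v}$ ($0\le k\le n$), $d_{nk}=0$ ($k>n$), $\rho_{1,2}=\frac{-s\pm\sqrt{s^2-4tr}}{2r}$. With $\widehat W_n(x)=\frac{1}{\lambda_n}\sum_{k=0}^n(\lambda_k-\lambda_{k-1})(rx_k+sx_{k-1}+tx_{k-2})$, for $\mu\in\{c_0,c,\ell_\infty,\ell_p\}$ set $\mu^\lambda(\widehat B)=\{x\in\omega:(\widehat W_n(x))_n\in\mu\}$. The $\alpha$-dual of a sequence space $X$ is $X^\alpha=\{a\in\omega:(a_kx_k)\in\ell_1\text{ for all }x\in X\}$. *)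

theory Defs
  imports "HOL-Analysis.Analysis"
begin

text \<open>Sequences in omega are complex sequences indexed by nat.
  Terms with negative subscript are 0: we encode x_{k-1} via a shift.\<close>

definition shift :: "(nat \<Rightarrow> 'a::zero) \<Rightarrow> nat \<Rightarrow> nat \<Rightarrow> 'a" where
  "shift x j k = (if j \<le> k then x (k - j) else 0)"

definition lam_prev :: "(nat \<Rightarrow> real) \<Rightarrow> nat \<Rightarrow> real" where
  "lam_prev lam k = shift lam 1 k"

definition rho1 :: "real \<Rightarrow> real \<Rightarrow> real \<Rightarrow> complex" where
  "rho1 r s t = (- complex_of_real s + csqrt (complex_of_real (s\<^sup>2 - 4*t*r))) / complex_of_real (2*r)"

definition rho2 :: "real \<Rightarrow> real \<Rightarrow> real \<Rightarrow> complex" where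
  "rho2 r s t = (- complex_of_real s - csqrt (complex_of_real (s\<^sup>2 - 4*t*r))) / complex_of_real (2*r)"

text \<open>Entries of D = B(r,s,t)^{-1}\<close>
definition dmat :: "real \<Rightarrow> real \<Rightarrow> real \<Rightarrow> nat \<Rightarrow> nat \<Rightarrow> complex" where
  "dmat r s t n k = (if k \<le> n then
      (1 / complex_of_real r) * (\<Sum>v=0..n-k. rho1 r s t ^ (n-k-v) * rho2 r s t ^ v)
    else 0)"

definition What :: "real \<Rightarrow> real \<Rightarrow> real \<Rightarrow> (nat \<Rightarrow> real) \<Rightarrow> (nat \<Rightarrow> complex) \<Rightarrow> nat \<Rightarrow> complex" where
  "What r s t lam x n = complex_of_real (1 / lam n) *
     (\<Sum>k=0..n. complex_of_real (lam k - lam_prev lam k) *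
        (complex_of_real r * x k + complex_of_real s * shift x 1 k + complex_of_real t * shift x 2 k))"

definition c0_lam :: "real \<Rightarrow> real \<Rightarrow> real \<Rightarrow> (nat \<Rightarrow> real) \<Rightarrow> (nat \<Rightarrow> complex) set" where
  "c0_lam r s t lam = {x. What r s t lam x \<longlonglongrightarrow> 0}"

definition c_lam :: "real \<Rightarrow> real \<Rightarrow> real \<Rightarrow> (nat \<Rightarrow> real) \<Rightarrow> (nat \<Rightarrow> complex) set" where
  "c_lam r s t lam = {x. convergent (What r s t lam x)}"

definition linf_lam :: "real \<Rightarrow> real \<Rightarrow> real \<Rightarrow> (nat \<Rightarrow> real) \<Rightarrow> (nat \<Rightarrow> complex) set" where
  "linf_lam r s t lam = {x. Bseq (What r s t lam x)}"

definition lp_lam :: "real \<Rightarrow> real \<Rightarrow> real \<Rightarrow> real \<Rightarrow> (nat \<Rightarrow> real) \<Rightarrow> (nat \<Rightarrow> complex) set" where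
  "lp_lam p r s t lam = {x. summable (\<lambda>n. norm (What r s t lam x n) powr p)}"

definition alpha_dual :: "(nat \<Rightarrow> complex) set \<Rightarrow> (nat \<Rightarrow> complex) set" where
  "alpha_dual X = {a. \<forall>x\<in>X. summable (\<lambda>k. norm (a k * x k))}"

definition fmat :: "real \<Rightarrow> real \<Rightarrow> real \<Rightarrow> (nat \<Rightarrow> real) \<Rightarrow> (nat \<Rightarrow> complex) \<Rightarrow> nat \<Rightarrow> nat \<Rightarrow> complex" where
  "fmat r s t lam a n k =
    (if k < n then
       (dmat r s t n k * complex_of_real (lam k / (lam k - lam_prev lam k))
        - dmat r s t n (k+1) * complex_of_real (lam k / (lam (k+1) - lam k))) * a n
     else if k = n then
       complex_of_real ((1 / r) * (lam n / (lam n - lam_prev lam n))) * a n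
     else 0)"

definition f1_lam :: "real \<Rightarrow> real \<Rightarrow> real \<Rightarrow> (nat \<Rightarrow> real) \<Rightarrow> (nat \<Rightarrow> complex) set" where
  "f1_lam r s t lam = {a. \<exists>M. \<forall>K. finite K \<longrightarrow>
      summable (\<lambda>n. norm (\<Sum>k\<in>K. fmat r s t lam a n k)) \<and>
      (\<Sum>n. norm (\<Sum>k\<in>K. fmat r s t lam a n k)) \<le> M}"

definition f6_lam :: "real \<Rightarrow> real \<Rightarrow> real \<Rightarrow> real \<Rightarrow> (nat \<Rightarrow> real) \<Rightarrow> (nat \<Rightarrow> complex) set" where
  "f6_lam q r s t lam = {a. \<exists>M. \<forall>N. finite N \<longrightarrow>
      summable (\<lambda>k. norm (\<Sum>n\<in>N. fmat r s t lam a n k) powr q) \<and>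
      (\<Sum>k. norm (\<Sum>n\<in>N. fmat r s t lam a n k) powr q) \<le> M}"

end

theory Submission
  imports Defs
begin

text \<open>The map \<open>x \<mapsto> \<^bold>W(x)\<close> is the composite of \<open>B(r,s,t)\<close> with the \<open>\<lambda>\<close>-weighted mean.
  Both are bijections of \<open>\<omega>\<close>, inverted by \<open>D\<close> and by a telescoping difference, and composing
  the inverses gives \<open>x = F y\<close> for \<open>y = \<^bold>W(x)\<close>, where \<open>F\<close> is \<open>F\<^sup>\<lambda>\<close> with \<open>a = 1\<close>; hence
  \<open>a\<^sub>n x\<^sub>n = (F\<^sup>\<lambda> y)\<^sub>n\<close>. So \<open>a\<close> lies in the \<open>\<alpha>\<close>-dual of \<open>\<mu>\<^sup>\<lambda>(B)\<close> exactly when the lower-triangular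
  matrix \<open>F\<^sup>\<lambda>\<close> maps \<open>\<mu>\<close> into \<open>\<ell>\<^sub>1\<close>, and the theorem reduces to the classical characterisations of
  \<open>(c\<^sub>0,\<ell>\<^sub>1) = (c,\<ell>\<^sub>1) = (\<ell>\<^sub>\<infinity>,\<ell>\<^sub>1)\<close> and \<open>(\<ell>\<^sub>p,\<ell>\<^sub>1)\<close>. Sufficiency rests on the fact that a finite
  family of complex numbers has a subfamily whose sum has modulus at least a quarter of the total
  modulus, together with Hoelder's inequality; necessity is a gliding-hump construction.\<close>

section \<open>Finite sums\<close>

lemma sum_abs_eq_diff_sign_subsums:
  fixes f :: "'a \<Rightarrow> real"
  assumes "finite A"
  shows "(\<Sum>i\<in>A. \<bar>f i\<bar>) = (\<Sum>i\<in>{i\<in>A. 0 \<le> f i}. f i) - (\<Sum>i\<in>{i\<in>A. f i < 0}. f i)"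
proof -
  have "(\<Sum>i\<in>A. \<bar>f i\<bar>) = (\<Sum>i\<in>{i\<in>A. 0 \<le> f i}. \<bar>f i\<bar>) + (\<Sum>i\<in>{i\<in>A. f i < 0}. \<bar>f i\<bar>)"
    using assms by (subst sum.union_disjoint[symmetric]) (auto intro: sum.cong)
  then show ?thesis by (simp add: sum_negf[symmetric])
qed

lemma sum_norm_le_four_norm_subsum:
  fixes g :: "'a \<Rightarrow> complex"
  assumes "finite A"
  obtains B where "B \<subseteq> A" "(\<Sum>i\<in>A. norm (g i)) \<le> 4 * norm (\<Sum>i\<in>B. g i)"
proof -
  define P where "P = {i\<in>A. 0 \<le> Re (g i)}"
  define N where "N = {i\<in>A. Re (g i) < 0}"
  define P' where "P' = {i\<in>A. 0 \<le> Im (g i)}"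
  define N' where "N' = {i\<in>A. Im (g i) < 0}"
  have "(\<Sum>i\<in>A. \<bar>Re (g i)\<bar>) = Re (sum g P) - Re (sum g N)"
    using sum_abs_eq_diff_sign_subsums[OF assms, of "\<lambda>i. Re (g i)"] by (simp add: Re_sum P_def N_def)
  also have "\<dots> \<le> norm (sum g P) + norm (sum g N)"
    using abs_Re_le_cmod[of "sum g P"] abs_Re_le_cmod[of "sum g N"] by linarith
  finally have re: "(\<Sum>i\<in>A. \<bar>Re (g i)\<bar>) \<le> norm (sum g P) + norm (sum g N)" .
  have "(\<Sum>i\<in>A. \<bar>Im (g i)\<bar>) = Im (sum g P') - Im (sum g N')"
    using sum_abs_eq_diff_sign_subsums[OF assms, of "\<lambda>i. Im (g i)"] by (simp add: Im_sum P'_def N'_def)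
  also have "\<dots> \<le> norm (sum g P') + norm (sum g N')"
    using abs_Im_le_cmod[of "sum g P'"] abs_Im_le_cmod[of "sum g N'"] by linarith
  finally have im: "(\<Sum>i\<in>A. \<bar>Im (g i)\<bar>) \<le> norm (sum g P') + norm (sum g N')" .
  have tot: "(\<Sum>i\<in>A. norm (g i)) \<le> (\<Sum>i\<in>A. \<bar>Re (g i)\<bar>) + (\<Sum>i\<in>A. \<bar>Im (g i)\<bar>)"
    by (simp add: sum.distrib[symmetric] sum_mono cmod_le)
  have "\<exists>B\<in>{P, N, P', N'}. (\<Sum>i\<in>A. norm (g i)) \<le> 4 * norm (sum g B)"
  proof (rule ccontr)
    assume "\<not> ?thesis"
    with tot re im show False by auto
  qed
  moreover have "P \<subseteq> A" "N \<subseteq> A" "P' \<subseteq> A" "N' \<subseteq> A" by (auto simp: P_def N_def P'_def N'_def)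
  ultimately show ?thesis using that by blast
qed

lemma Holder_ineq_sum:
  fixes a b :: "'a \<Rightarrow> real"
  assumes fin: "finite I" and a0: "\<And>i. 0 \<le> a i" and b0: "\<And>i. 0 \<le> b i"
    and p: "1 < p" and q: "1 < q" and pq: "1/p + 1/q = 1"
  shows "(\<Sum>i\<in>I. a i * b i) \<le> (\<Sum>i\<in>I. a i powr p) powr (1/p) * (\<Sum>i\<in>I. b i powr q) powr (1/q)"
proof -
  define SA where "SA = (\<Sum>i\<in>I. a i powr p)"
  define SB where "SB = (\<Sum>i\<in>I. b i powr q)"
  have SA0: "0 \<le> SA" and SB0: "0 \<le> SB" unfolding SA_def SB_def by (auto intro: sum_nonneg)
  show ?thesis
  proof (cases "SA = 0 \<or> SB = 0")
    case True
    then have "(\<forall>i\<in>I. a i = 0) \<or> (\<forall>i\<in>I. b i = 0)"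
      unfolding SA_def SB_def using fin by (subst (asm) (1 2) sum_nonneg_eq_0_iff) auto
    then have "(\<Sum>i\<in>I. a i * b i) = 0" by auto
    then show ?thesis using SA0 SB0 unfolding SA_def SB_def by simp
  next
    case False
    then have SAp: "0 < SA" and SBp: "0 < SB" using SA0 SB0 by auto
    define \<alpha> where "\<alpha> = SA powr (1/p)"
    define \<beta> where "\<beta> = SB powr (1/q)"
    have ap: "0 < \<alpha>" and bp: "0 < \<beta>" using SAp SBp by (auto simp: \<alpha>_def \<beta>_def)
    have ap2: "\<alpha> powr p = SA" using SAp p by (simp add: \<alpha>_def powr_powr)
    have bp2: "\<beta> powr q = SB" using SBp q by (simp add: \<beta>_def powr_powr)
    have "(\<Sum>i\<in>I. (a i / \<alpha>) * (b i / \<beta>)) \<le> (\<Sum>i\<in>I. (a i / \<alpha>) powr p / p + (b i / \<beta>) powr q / q)"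
      by (intro sum_mono Youngs_inequality p q pq) (use a0 b0 ap bp in auto)
    also have "\<dots> = SA / (SA * p) + SB / (SB * q)"
      by (simp add: powr_divide ap2 bp2 sum.distrib sum_divide_distrib SA_def SB_def)
    also have "\<dots> = 1" using SAp SBp p q pq by simp
    finally have "(\<Sum>i\<in>I. a i * b i) / (\<alpha> * \<beta>) \<le> 1"
      by (simp add: sum_divide_distrib mult.commute)
    then show ?thesis using ap bp by (simp add: \<alpha>_def \<beta>_def SA_def SB_def pos_divide_le_eq)
  qed
qed

lemma conjugate_exponent_gt_1:
  fixes p q :: real
  assumes "1 < p" "1/p + 1/q = 1"
  shows "1 < q"
proof -
  have "1/q = 1 - 1/p" using assms(2) by simp
  moreover have "0 < 1 - 1/p" "1 - 1/p < 1" using assms(1) by auto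
  ultimately have "0 < 1/q" "1/q < 1" by auto
  then show ?thesis by (simp add: divide_less_eq split: if_splits)
qed

lemma summable_imp_eventually_sums_beyond_less:
  fixes f :: "nat \<Rightarrow> real"
  assumes "summable f" "\<And>n. 0 \<le> f n" "0 < e"
  shows "\<forall>\<^sub>F a in sequentially. \<forall>N. finite N \<longrightarrow> N \<subseteq> {a<..} \<longrightarrow> sum f N < e"
proof -
  obtain M where M: "\<And>m n. m \<ge> M \<Longrightarrow> norm (sum f {m..<n}) < e"
    using assms(1,3) unfolding summable_Cauchy by blast
  have "sum f N < e" if "M \<le> a" "finite N" "N \<subseteq> {a<..}" for a N
  proof -
    have "sum f N \<le> sum f {M..<Suc (Max (insert 0 N))}"
      using that assms(2) by (intro sum_mono2) (auto simp: le_imp_less_Suc Max_ge)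
    also have "\<dots> < e" using M[of M "Suc (Max (insert 0 N))"] assms(2) by (simp add: sum_nonneg)
    finally show ?thesis .
  qed
  then show ?thesis unfolding eventually_sequentially by blast
qed

lemma not_summable_disjoint_family:
  fixes f :: "nat \<Rightarrow> real" and S :: "nat \<Rightarrow> nat set"
  assumes "\<And>n. 0 \<le> f n" "\<And>j. finite (S j)" "disjoint_family S" "\<And>j. 1 \<le> sum f (S j)"
  shows "\<not> summable f"
proof
  assume "summable f"
  have "real m \<le> suminf f" for m
  proof -
    have "real m \<le> (\<Sum>j<m. sum f (S j))" using sum_mono[of "{..<m}" "\<lambda>_. 1", OF assms(4)] by simp
    also have "\<dots> = sum f (\<Union>j<m. S j)"
      using assms(2,3) by (intro sum.UNION_disjoint[symmetric]) (auto simp: disjoint_family_on_def)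
    also have "\<dots> \<le> suminf f" using assms(1,2) \<open>summable f\<close> by (intro sum_le_suminf) auto
    finally show ?thesis .
  qed
  from this[of "nat \<lceil>suminf f\<rceil> + 1"] show False by linarith
qed

section \<open>Lower-triangular matrices mapping into \<open>\<ell>\<^sub>1\<close>: sufficiency\<close>

definition lower_triangular :: "(nat \<Rightarrow> nat \<Rightarrow> complex) \<Rightarrow> bool" where
  "lower_triangular G \<longleftrightarrow> (\<forall>n k. n < k \<longrightarrow> G n k = 0)"

definition tri_apply :: "(nat \<Rightarrow> nat \<Rightarrow> complex) \<Rightarrow> (nat \<Rightarrow> complex) \<Rightarrow> nat \<Rightarrow> complex" where
  "tri_apply G y n = (\<Sum>k\<le>n. G n k * y k)"

definition col_subsums_bounded :: "(nat \<Rightarrow> nat \<Rightarrow> complex) \<Rightarrow> bool" where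
  "col_subsums_bounded G \<longleftrightarrow> (\<exists>M. \<forall>K. finite K \<longrightarrow>
     summable (\<lambda>n. norm (\<Sum>k\<in>K. G n k)) \<and> (\<Sum>n. norm (\<Sum>k\<in>K. G n k)) \<le> M)"

definition row_subsums_bounded :: "real \<Rightarrow> (nat \<Rightarrow> nat \<Rightarrow> complex) \<Rightarrow> bool" where
  "row_subsums_bounded q G \<longleftrightarrow> (\<exists>M. \<forall>N. finite N \<longrightarrow>
     summable (\<lambda>k. norm (\<Sum>n\<in>N. G n k) powr q) \<and> (\<Sum>k. norm (\<Sum>n\<in>N. G n k) powr q) \<le> M)"

lemma tri_apply_cong: "(\<And>k. k \<le> n \<Longrightarrow> y k = z k) \<Longrightarrow> tri_apply G y n = tri_apply G z n"
  unfolding tri_apply_def by (intro sum.cong) auto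

lemma tri_apply_add: "tri_apply G (\<lambda>k. y k + z k) n = tri_apply G y n + tri_apply G z n"
  unfolding tri_apply_def by (simp add: distrib_left sum.distrib)

lemma tri_apply_cmult: "tri_apply G (\<lambda>k. c * y k) n = c * tri_apply G y n"
  unfolding tri_apply_def by (simp add: sum_distrib_left mult_ac)

lemma norm_tri_apply_le:
  assumes "\<And>k. norm (y k) \<le> 1"
  shows "norm (tri_apply G y n) \<le> (\<Sum>k\<le>n. norm (G n k))"
  unfolding tri_apply_def
  by (rule order_trans[OF norm_sum]) (intro sum_mono, simp add: norm_mult mult_left_le assms)

lemma tri_apply_eq_sum_atMost:
  assumes "lower_triangular G" "n \<le> e"
  shows "tri_apply G y n = (\<Sum>k\<le>e. G n k * y k)"
  using assms unfolding tri_apply_def lower_triangular_def by (intro sum.mono_neutral_left) auto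

lemma tri_apply_eq_sum_atMost_support:
  assumes "lower_triangular G" "\<And>k. e < k \<Longrightarrow> y k = 0"
  shows "tri_apply G y n = (\<Sum>k\<le>e. G n k * y k)"
proof (cases "n \<le> e")
  case True
  then show ?thesis using tri_apply_eq_sum_atMost[OF assms(1)] by blast
next
  case False
  then show ?thesis unfolding tri_apply_def using assms(2) by (intro sum.mono_neutral_right) auto
qed

lemma sum_tri_apply_swap:
  assumes "lower_triangular G" "N \<subseteq> {..e}"
  shows "(\<Sum>n\<in>N. tri_apply G y n) = (\<Sum>k\<le>e. y k * (\<Sum>n\<in>N. G n k))"
proof -
  have "(\<Sum>n\<in>N. tri_apply G y n) = (\<Sum>n\<in>N. \<Sum>k\<le>e. G n k * y k)"
    using assms by (intro sum.cong refl tri_apply_eq_sum_atMost) auto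
  then show ?thesis by (simp add: sum.swap[of _ N] sum_distrib_left mult_ac)
qed

lemma sum_column_eq_0:
  assumes "lower_triangular G" "N \<subseteq> {..e}" "e < k"
  shows "(\<Sum>n\<in>N. G n k) = 0"
  using assms unfolding lower_triangular_def by (intro sum.neutral) auto

lemma tri_apply_indicator:
  assumes "lower_triangular G" "finite K"
  shows "tri_apply G (\<lambda>k. if k \<in> K then 1 else 0) n = (\<Sum>k\<in>K. G n k)"
proof -
  define e where "e = Max (insert 0 K)"
  have K: "K \<subseteq> {..e}" using assms(2) by (auto simp: e_def)
  have "tri_apply G (\<lambda>k. if k \<in> K then 1 else 0) n = (\<Sum>k\<le>e. if k \<in> K then G n k else 0)"
    using K by (subst tri_apply_eq_sum_atMost_support[OF assms(1), of e]) (auto intro: sum.cong)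
  also have "\<dots> = (\<Sum>k\<in>K. G n k)"
    using K by (simp add: sum.inter_restrict[symmetric] Int_absorb1)
  finally show ?thesis .
qed

lemma norm_sum_tri_apply_head_le:
  assumes "lower_triangular G" "\<And>k. b < k \<Longrightarrow> y k = 0" "\<And>k. norm (y k) \<le> 1"
  shows "norm (\<Sum>n\<in>N. tri_apply G y n) \<le> (\<Sum>k\<le>b. \<Sum>n\<in>N. norm (G n k))"
proof -
  have "(\<Sum>n\<in>N. tri_apply G y n) = (\<Sum>k\<le>b. y k * (\<Sum>n\<in>N. G n k))"
    using tri_apply_eq_sum_atMost_support[OF assms(1,2)]
    by (simp add: sum.swap[of _ N] sum_distrib_left mult_ac)
  then have "norm (\<Sum>n\<in>N. tri_apply G y n) \<le> (\<Sum>k\<le>b. norm (y k * (\<Sum>n\<in>N. G n k)))"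
    by (simp add: norm_sum)
  also have "\<dots> \<le> (\<Sum>k\<le>b. norm (\<Sum>n\<in>N. G n k))"
    by (intro sum_mono) (simp add: norm_mult mult_left_le_one_le assms(3))
  also have "\<dots> \<le> (\<Sum>k\<le>b. \<Sum>n\<in>N. norm (G n k))" by (intro sum_mono norm_sum)
  finally show ?thesis .
qed

lemma norm_sum_tri_apply_le_rows:
  assumes "N \<subseteq> {..a}" "\<And>k. norm (w k) \<le> 1"
  shows "norm (\<Sum>n\<in>N. tri_apply G w n) \<le> (\<Sum>n\<le>a. \<Sum>k\<le>n. norm (G n k))"
proof -
  have "norm (\<Sum>n\<in>N. tri_apply G w n) \<le> (\<Sum>n\<in>N. \<Sum>k\<le>n. norm (G n k))"
    by (rule order_trans[OF norm_sum]) (intro sum_mono norm_tri_apply_le assms(2))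
  also have "\<dots> \<le> (\<Sum>n\<le>a. \<Sum>k\<le>n. norm (G n k))"
    using assms(1) by (intro sum_mono2) (auto intro: sum_nonneg)
  finally show ?thesis .
qed

lemma partial_sum_norm_tri_apply_le:
  assumes "lower_triangular G"
  obtains B where "B \<subseteq> {..<m}"
    "(\<Sum>n<m. norm (tri_apply G y n)) \<le> 4 * norm (\<Sum>k\<le>m. y k * (\<Sum>n\<in>B. G n k))"
proof -
  obtain B where B: "B \<subseteq> {..<m}" "(\<Sum>n<m. norm (tri_apply G y n)) \<le> 4 * norm (\<Sum>n\<in>B. tri_apply G y n)"
    using sum_norm_le_four_norm_subsum[of "{..<m}" "tri_apply G y"] by auto
  moreover have "(\<Sum>n\<in>B. tri_apply G y n) = (\<Sum>k\<le>m. y k * (\<Sum>n\<in>B. G n k))"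
    using B(1) by (intro sum_tri_apply_swap[OF assms]) auto
  ultimately show ?thesis using that by simp
qed

theorem summable_tri_apply_if_col_subsums_bounded:
  assumes LT: "lower_triangular G" and "col_subsums_bounded G" and "Bseq y"
  shows "summable (\<lambda>n. norm (tri_apply G y n))"
proof -
  obtain C where C: "C > 0" "\<And>k. norm (y k) \<le> C" using \<open>Bseq y\<close> by (auto elim: BseqE)
  obtain M where M: "\<And>K. finite K \<Longrightarrow> summable (\<lambda>n. norm (\<Sum>k\<in>K. G n k))"
      "\<And>K. finite K \<Longrightarrow> (\<Sum>n. norm (\<Sum>k\<in>K. G n k)) \<le> M"
    using assms(2) unfolding col_subsums_bounded_def by blast
  show ?thesis
  proof (rule summableI_nonneg_bounded)
    fix m
    obtain B where B: "B \<subseteq> {..<m}"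
      "(\<Sum>n<m. norm (tri_apply G y n)) \<le> 4 * norm (\<Sum>k\<le>m. y k * (\<Sum>n\<in>B. G n k))"
      using partial_sum_norm_tri_apply_le[OF LT] by blast
    define c where "c k = (\<Sum>n\<in>B. G n k)" for k
    obtain K where K: "K \<subseteq> {..m}" "(\<Sum>k\<le>m. norm (c k)) \<le> 4 * norm (\<Sum>k\<in>K. c k)"
      using sum_norm_le_four_norm_subsum[of "{..m}" c] by auto
    have fin: "finite K" "finite B" using K(1) B(1) finite_subset by auto
    have "norm (\<Sum>k\<in>K. c k) \<le> M"
    proof -
      have "norm (\<Sum>k\<in>K. c k) \<le> (\<Sum>n\<in>B. norm (\<Sum>k\<in>K. G n k))"
        unfolding c_def by (subst sum.swap) (rule norm_sum)
      also have "\<dots> \<le> (\<Sum>n. norm (\<Sum>k\<in>K. G n k))" by (intro sum_le_suminf M(1) fin) auto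
      finally show ?thesis using M(2)[OF fin(1)] by simp
    qed
    have "(\<Sum>n<m. norm (tri_apply G y n)) \<le> 4 * norm (\<Sum>k\<le>m. y k * c k)"
      using B(2) by (simp add: c_def)
    also have "norm (\<Sum>k\<le>m. y k * c k) \<le> (\<Sum>k\<le>m. C * norm (c k))"
      by (rule order_trans[OF norm_sum]) (intro sum_mono, simp add: norm_mult mult_right_mono C)
    also have "\<dots> = C * (\<Sum>k\<le>m. norm (c k))" by (simp add: sum_distrib_left)
    also have "\<dots> \<le> C * (4 * M)"
      using K(2) \<open>norm (\<Sum>k\<in>K. c k) \<le> M\<close> C(1) by (intro mult_left_mono) auto
    finally show "(\<Sum>n<m. norm (tri_apply G y n)) \<le> 16 * C * M" by simp
  qed simp
qed

theorem summable_tri_apply_if_row_subsums_bounded: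
  assumes LT: "lower_triangular G" and p: "1 < p" and pq: "1/p + 1/q = 1"
    and "row_subsums_bounded q G" and y: "summable (\<lambda>k. norm (y k) powr p)"
  shows "summable (\<lambda>n. norm (tri_apply G y n))"
proof -
  have q: "1 < q" by (rule conjugate_exponent_gt_1[OF p pq])
  obtain M where M: "\<And>N. finite N \<Longrightarrow> summable (\<lambda>k. norm (\<Sum>n\<in>N. G n k) powr q)"
      "\<And>N. finite N \<Longrightarrow> (\<Sum>k. norm (\<Sum>n\<in>N. G n k) powr q) \<le> M"
    using assms(4) unfolding row_subsums_bounded_def by blast
  define Y where "Y = (\<Sum>k. norm (y k) powr p)"
  show ?thesis
  proof (rule summableI_nonneg_bounded)
    fix m
    obtain B where B: "B \<subseteq> {..<m}"
      "(\<Sum>n<m. norm (tri_apply G y n)) \<le> 4 * norm (\<Sum>k\<le>m. y k * (\<Sum>n\<in>B. G n k))"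
      using partial_sum_norm_tri_apply_le[OF LT] by blast
    define c where "c k = (\<Sum>n\<in>B. G n k)" for k
    have fB: "finite B" using B(1) finite_subset by blast
    have "norm (\<Sum>k\<le>m. y k * c k) \<le> (\<Sum>k\<le>m. norm (y k) * norm (c k))"
      by (rule order_trans[OF norm_sum]) (simp add: norm_mult)
    also have "\<dots> \<le> (\<Sum>k\<le>m. norm (y k) powr p) powr (1/p) * (\<Sum>k\<le>m. norm (c k) powr q) powr (1/q)"
      by (rule Holder_ineq_sum) (use p q pq in auto)
    also have "\<dots> \<le> Y powr (1/p) * M powr (1/q)"
    proof (intro mult_mono powr_mono2)
      show "(\<Sum>k\<le>m. norm (y k) powr p) \<le> Y" unfolding Y_def by (intro sum_le_suminf y) auto
      have "(\<Sum>k\<le>m. norm (c k) powr q) \<le> (\<Sum>k. norm (c k) powr q)"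
        unfolding c_def by (intro sum_le_suminf M(1) fB) auto
      then show "(\<Sum>k\<le>m. norm (c k) powr q) \<le> M" using M(2)[OF fB] by (simp add: c_def)
    qed (use p q in \<open>auto intro: sum_nonneg\<close>)
    finally show "(\<Sum>n<m. norm (tri_apply G y n)) \<le> 4 * (Y powr (1/p) * M powr (1/q))"
      using B(2) by (simp add: c_def)
  qed simp
qed

section \<open>Necessity: the gliding hump\<close>

lemma block_index:
  fixes bb :: "nat \<Rightarrow> nat"
  assumes "strict_mono bb" "bb j < k" "k \<le> bb (Suc j)"
  shows "(LEAST i. k \<le> bb (Suc i)) = j"
proof (rule Least_equality)
  show "j \<le> i" if "k \<le> bb (Suc i)" for i
    using that assms strict_mono_less_eq[OF assms(1), of "Suc i" j] by (meson not_le not_less_eq_eq order.strict_trans1)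
qed (use assms in simp)

lemma block_cover:
  fixes bb :: "nat \<Rightarrow> nat"
  assumes "strict_mono bb" "bb 0 = 0" "0 < k"
  obtains j where "bb j < k" "k \<le> bb (Suc j)"
proof -
  define j where "j = (LEAST i. k \<le> bb (Suc i))"
  have "k \<le> bb (Suc k)" using seq_suble[OF assms(1), of "Suc k"] by simp
  then have "k \<le> bb (Suc j)" unfolding j_def by (rule LeastI)
  moreover have "bb j < k"
  proof (cases j)
    case (Suc i)
    then have "\<not> k \<le> bb (Suc i)" unfolding j_def by (metis lessI not_less_Least)
    then show ?thesis using Suc by simp
  qed (use assms in simp)
  ultimately show ?thesis using that by blast
qed

lemma exists_block_sequence:
  fixes bb :: "nat \<Rightarrow> nat" and f :: "nat \<Rightarrow> nat \<Rightarrow> 'a :: zero"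
  assumes "strict_mono bb"
  obtains y where "y 0 = 0" "\<And>j k. bb j < k \<Longrightarrow> k \<le> bb (Suc j) \<Longrightarrow> y k = f j k"
proof -
  define y where "y k = (if k = 0 then 0 else f (LEAST i. k \<le> bb (Suc i)) k)" for k
  have "y 0 = 0" by (simp add: y_def)
  moreover have "y k = f j k" if "bb j < k" "k \<le> bb (Suc j)" for j k
    using that block_index[OF assms that] by (simp add: y_def)
  ultimately show ?thesis by (rule that)
qed

lemma exists_block_bounds:
  fixes A :: "nat \<Rightarrow> nat" and N :: "nat \<Rightarrow> nat \<Rightarrow> nat set"
  assumes "\<And>b. b \<le> A b" "\<And>j b. finite (N j b)"
  obtains bb where "strict_mono bb" "bb 0 = 0" "\<And>j. A (bb j) < bb (Suc j)"
    "\<And>j n. n \<in> N j (bb j) \<Longrightarrow> n < bb (Suc j)"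
proof -
  define bb where "bb = rec_nat 0 (\<lambda>j b. Suc (max (Max (insert 0 (N j b))) (A b)))"
  have bbS: "bb (Suc j) = Suc (max (Max (insert 0 (N j (bb j)))) (A (bb j)))" for j
    by (simp add: bb_def)
  have A_less: "A (bb j) < bb (Suc j)" for j by (simp add: bbS)
  then have mono: "strict_mono bb" unfolding strict_mono_Suc_iff using assms(1) le_less_trans by blast
  have N_less: "n < bb (Suc j)" if "n \<in> N j (bb j)" for j n
  proof -
    have "n \<le> Max (insert 0 (N j (bb j)))" using that assms(2) by (intro Max_ge) auto
    then show ?thesis by (simp add: bbS)
  qed
  have "bb 0 = 0" by (simp add: bb_def)
  from mono this A_less N_less show ?thesis by (rule that)
qed

lemma exists_column_tail_bounds:
  fixes G :: "nat \<Rightarrow> nat \<Rightarrow> complex"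
  assumes "\<And>k. summable (\<lambda>n. norm (G n k))"
  obtains A where "\<And>b. b \<le> A b"
    "\<And>b N. finite N \<Longrightarrow> N \<subseteq> {A b<..} \<Longrightarrow> (\<Sum>k\<le>b. \<Sum>n\<in>N. norm (G n k)) \<le> 1"
proof -
  have "\<forall>\<^sub>F a in sequentially. b \<le> a \<and> (\<forall>N. finite N \<longrightarrow> N \<subseteq> {a<..} \<longrightarrow> (\<Sum>k\<le>b. \<Sum>n\<in>N. norm (G n k)) \<le> 1)" for b
  proof -
    have "\<forall>\<^sub>F a in sequentially. \<forall>k\<in>{..b}. \<forall>N. finite N \<longrightarrow> N \<subseteq> {a<..} \<longrightarrow> (\<Sum>n\<in>N. norm (G n k)) < 1 / real (Suc b)"
      using assms by (intro eventually_ball_finite ballI summable_imp_eventually_sums_beyond_less) auto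
    then show ?thesis using eventually_ge_at_top[of b]
    proof eventually_elim
      case (elim a)
      have "(\<Sum>k\<le>b. \<Sum>n\<in>N. norm (G n k)) \<le> 1" if "finite N" "N \<subseteq> {a<..}" for N
      proof -
        have "(\<Sum>k\<le>b. \<Sum>n\<in>N. norm (G n k)) \<le> (\<Sum>k\<le>b. 1 / real (Suc b))"
          using elim that by (intro sum_mono) (simp add: less_imp_le)
        then show ?thesis by simp
      qed
      then show ?case using elim by blast
    qed
  qed
  then have "\<exists>a. b \<le> a \<and> (\<forall>N. finite N \<longrightarrow> N \<subseteq> {a<..} \<longrightarrow> (\<Sum>k\<le>b. \<Sum>n\<in>N. norm (G n k)) \<le> 1)" for b
    by (rule eventually_happens'[OF sequentially_bot])
  then obtain A where "b \<le> A b \<and> (\<forall>N. finite N \<longrightarrow> N \<subseteq> {A b<..} \<longrightarrow> (\<Sum>k\<le>b. \<Sum>n\<in>N. norm (G n k)) \<le> 1)" for b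
    by metis
  then show ?thesis by (intro that[of A]) auto
qed

lemma norm_sum_tri_apply_le_hump:
  fixes G :: "nat \<Rightarrow> nat \<Rightarrow> complex"
  assumes LT: "lower_triangular G" and N: "finite N" and w: "\<And>k. norm (w k) \<le> 1"
    and tail: "\<And>N'. finite N' \<Longrightarrow> N' \<subseteq> {a<..} \<Longrightarrow> (\<Sum>k\<le>b. \<Sum>n\<in>N'. norm (G n k)) \<le> 1"
  shows "norm (\<Sum>n\<in>N. tri_apply G w n) \<le> (\<Sum>n\<le>a. \<Sum>k\<le>n. norm (G n k))
      + (1 + norm (\<Sum>n\<in>{n\<in>N. a < n}. tri_apply G (\<lambda>k. if b < k then w k else 0) n))"
proof -
  define N' where "N' = {n\<in>N. a < n}"
  define head where "head k = (if k \<le> b then w k else 0)" for k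
  define hump where "hump = (\<lambda>k. if b < k then w k else 0)"
  have "norm (\<Sum>n\<in>N'. tri_apply G head n) \<le> (\<Sum>k\<le>b. \<Sum>n\<in>N'. norm (G n k))"
    using w by (intro norm_sum_tri_apply_head_le[OF LT]) (auto simp: head_def)
  also have "\<dots> \<le> 1" using N by (intro tail) (auto simp: N'_def)
  finally have head_le: "norm (\<Sum>n\<in>N'. tri_apply G head n) \<le> 1" .
  have rows_le: "norm (\<Sum>n\<in>N - N'. tri_apply G w n) \<le> (\<Sum>n\<le>a. \<Sum>k\<le>n. norm (G n k))"
    by (rule norm_sum_tri_apply_le_rows) (auto simp: N'_def w)
  have "w = (\<lambda>k. head k + hump k)" by (auto simp: head_def hump_def)
  then have "tri_apply G w n = tri_apply G head n + tri_apply G hump n" for n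
    by (metis tri_apply_add)
  then have w_sum: "(\<Sum>n\<in>N'. tri_apply G w n) = (\<Sum>n\<in>N'. tri_apply G head n) + (\<Sum>n\<in>N'. tri_apply G hump n)"
    by (simp add: sum.distrib)
  have "N' \<subseteq> N" by (auto simp: N'_def)
  then have "(\<Sum>n\<in>N. tri_apply G w n) = (\<Sum>n\<in>N - N'. tri_apply G w n) + (\<Sum>n\<in>N'. tri_apply G w n)"
    using N by (rule sum.subset_diff)
  also note w_sum
  finally have decomp: "(\<Sum>n\<in>N. tri_apply G w n) = (\<Sum>n\<in>N - N'. tri_apply G w n)
      + ((\<Sum>n\<in>N'. tri_apply G head n) + (\<Sum>n\<in>N'. tri_apply G hump n))" .
  show ?thesis unfolding hump_def[symmetric] N'_def[symmetric] decomp using rows_le head_le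
      norm_triangle_ineq[of "\<Sum>n\<in>N - N'. tri_apply G w n" "(\<Sum>n\<in>N'. tri_apply G head n) + (\<Sum>n\<in>N'. tri_apply G hump n)"]
      norm_triangle_ineq[of "\<Sum>n\<in>N'. tri_apply G head n" "\<Sum>n\<in>N'. tri_apply G hump n"]
    by linarith
qed

text \<open>One hump: the tail of \<open>w\<close> beyond \<open>b\<close>, scaled by \<open>\<beta>\<close>, dominates the rows beyond \<open>a\<close>,
  because the rows up to \<open>a\<close> and the columns up to \<open>b\<close> contribute too little to cancel it.\<close>

lemma gliding_hump_block:
  fixes G :: "nat \<Rightarrow> nat \<Rightarrow> complex"
  assumes LT: "lower_triangular G" and N: "finite N" and \<beta>: "0 < \<beta>"
    and tail: "\<And>N'. finite N' \<Longrightarrow> N' \<subseteq> {a<..} \<Longrightarrow> (\<Sum>k\<le>b. \<Sum>n\<in>N'. norm (G n k)) \<le> 1"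
    and w: "\<And>k. norm (w k) \<le> 1" and y: "\<And>k. norm (y k) \<le> 1"
    and agree: "\<And>n k. n \<in> N \<Longrightarrow> b < k \<Longrightarrow> k \<le> n \<Longrightarrow> y k = of_real \<beta> * w k"
    and big: "2 / \<beta> + (\<Sum>n\<le>a. \<Sum>k\<le>n. norm (G n k)) + 1 \<le> norm (\<Sum>n\<in>N. tri_apply G w n)"
  shows "1 \<le> (\<Sum>n\<in>{n\<in>N. a < n}. norm (tri_apply G y n))"
proof -
  define N' where "N' = {n\<in>N. a < n}"
  define head where "head k = (if k \<le> b then y k else 0)" for k
  define hump where "hump = (\<lambda>k. if b < k then w k else 0)"
  have "2 / \<beta> \<le> norm (\<Sum>n\<in>N'. tri_apply G hump n)"
    using norm_sum_tri_apply_le_hump[where a=a and b=b and w=w, OF LT N w tail] big by (simp add: N'_def hump_def)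
  then have "2 \<le> norm (of_real \<beta> * (\<Sum>n\<in>N'. tri_apply G hump n))"
    using \<beta> by (simp add: norm_mult pos_divide_le_eq mult.commute)
  moreover have "norm (\<Sum>n\<in>N'. tri_apply G head n) \<le> (\<Sum>k\<le>b. \<Sum>n\<in>N'. norm (G n k))"
    using y by (intro norm_sum_tri_apply_head_le[OF LT]) (auto simp: head_def)
  moreover have "(\<Sum>k\<le>b. \<Sum>n\<in>N'. norm (G n k)) \<le> 1" using N by (intro tail) (auto simp: N'_def)
  moreover have "tri_apply G y n = tri_apply G head n + of_real \<beta> * tri_apply G hump n" if "n \<in> N'" for n
  proof -
    have "tri_apply G y n = tri_apply G (\<lambda>k. head k + of_real \<beta> * hump k) n"
      using that agree by (intro tri_apply_cong) (auto simp: head_def hump_def N'_def)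
    then show ?thesis by (simp add: tri_apply_add tri_apply_cmult)
  qed
  then have "(\<Sum>n\<in>N'. tri_apply G y n) = (\<Sum>n\<in>N'. tri_apply G head n) + of_real \<beta> * (\<Sum>n\<in>N'. tri_apply G hump n)"
    by (simp add: sum.distrib sum_distrib_left)
  ultimately have "1 \<le> norm (\<Sum>n\<in>N'. tri_apply G y n)"
    using norm_diff_ineq[of "of_real \<beta> * (\<Sum>n\<in>N'. tri_apply G hump n)" "\<Sum>n\<in>N'. tri_apply G head n"]
    by (simp add: add.commute)
  then show ?thesis unfolding N'_def using norm_sum order_trans by blast
qed

text \<open>The weights \<open>\<beta> j\<close> of the blocks are the caller's means of placing \<open>y\<close> in the domain
  space: \<open>\<beta> \<longlonglongrightarrow> 0\<close> gives \<open>y \<in> c\<^sub>0\<close>, \<open>\<Sum>\<beta> < \<infinity>\<close> together with \<open>R = ellp_ball p\<close> gives \<open>y \<in> \<ell>\<^sub>p\<close>.\<close>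

lemma gliding_hump:
  fixes G :: "nat \<Rightarrow> nat \<Rightarrow> complex" and \<beta> :: "nat \<Rightarrow> real"
    and R :: "(nat \<Rightarrow> complex) \<Rightarrow> bool"
  assumes LT: "lower_triangular G"
    and col: "\<And>k. summable (\<lambda>n. norm (G n k))"
    and \<beta>: "\<And>j. 0 < \<beta> j" "\<And>j. \<beta> j \<le> 1"
    and R: "\<And>w b. R w \<Longrightarrow> R (\<lambda>k. if b < k then w k else 0)"
    and large: "\<And>L. \<exists>N w. finite N \<and> (\<forall>k. norm (w k) \<le> 1) \<and> R w \<and> L \<le> norm (\<Sum>n\<in>N. tri_apply G w n)"
  obtains bb Z y where "strict_mono bb" "bb 0 = 0" "\<And>j. R (Z j)" "\<And>j k. norm (Z j k) \<le> 1"
    "y 0 = 0" "\<And>j k. bb j < k \<Longrightarrow> k \<le> bb (Suc j) \<Longrightarrow> y k = of_real (\<beta> j) * Z j k"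
    "\<not> summable (\<lambda>n. norm (tri_apply G y n))"
proof -
  obtain A where A: "\<And>b. b \<le> A b"
    "\<And>b N. finite N \<Longrightarrow> N \<subseteq> {A b<..} \<Longrightarrow> (\<Sum>k\<le>b. \<Sum>n\<in>N. norm (G n k)) \<le> 1"
    using exists_column_tail_bounds[of G, OF col] by blast
  obtain NL WL where W: "\<And>L. finite (NL L)" "\<And>L k. norm (WL L k) \<le> 1" "\<And>L. R (WL L)"
    "\<And>L. L \<le> norm (\<Sum>n\<in>NL L. tri_apply G (WL L) n)"
    using large by metis
  define L where "L j b = 2 / \<beta> j + (\<Sum>n\<le>A b. \<Sum>k\<le>n. norm (G n k)) + 1" for j b
  obtain bb where bb: "strict_mono bb" "bb 0 = 0" "\<And>j. A (bb j) < bb (Suc j)"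
    "\<And>j n. n \<in> NL (L j (bb j)) \<Longrightarrow> n < bb (Suc j)"
    using exists_block_bounds[of A "\<lambda>j b. NL (L j b)"] A(1) W(1) by blast
  define N where "N j = NL (L j (bb j))" for j
  define w where "w j = WL (L j (bb j))" for j
  define Z where "Z j k = (if bb j < k then w j k else 0)" for j k
  obtain y where y: "y 0 = 0" "\<And>j k. bb j < k \<Longrightarrow> k \<le> bb (Suc j) \<Longrightarrow> y k = of_real (\<beta> j) * Z j k"
    using exists_block_sequence[OF bb(1), of "\<lambda>j k. of_real (\<beta> j) * Z j k"] by blast
  have Z_le: "norm (Z j k) \<le> 1" for j k using W(2) by (simp add: Z_def w_def)
  have y_le: "norm (y k) \<le> 1" for k
  proof (cases "k = 0")
    case False
    then obtain j where "bb j < k" "k \<le> bb (Suc j)" using block_cover[OF bb(1,2)] by blast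
    then show ?thesis using y(2) Z_le[of j k] \<beta>[of j] by (simp add: norm_mult mult_le_one)
  qed (simp add: y(1))
  define hump where "hump j = {n\<in>N j. A (bb j) < n}" for j
  have "1 \<le> (\<Sum>n\<in>hump j. norm (tri_apply G y n))" for j
    unfolding hump_def
  proof (rule gliding_hump_block[OF LT _ \<beta>(1) A(2) _ y_le])
    show "finite (N j)" using W(1) by (simp add: N_def)
    show "norm (w j k) \<le> 1" for k using W(2) by (simp add: w_def)
    show "y k = of_real (\<beta> j) * w j k" if "n \<in> N j" "bb j < k" "k \<le> n" for n k
      using that bb(4)[of n j] y(2)[of j k] by (simp add: Z_def N_def)
    show "2 / \<beta> j + (\<Sum>n\<le>A (bb j). \<Sum>k\<le>n. norm (G n k)) + 1 \<le> norm (\<Sum>n\<in>N j. tri_apply G (w j) n)"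
      using W(4) by (simp add: L_def N_def w_def)
  qed
  moreover have "disjoint_family hump"
  proof -
    have hump_sub: "hump j \<subseteq> {bb j<..<bb (Suc j)}" for j
      using A(1)[of "bb j"] bb(4) by (fastforce simp: hump_def N_def)
    have "hump i \<inter> hump j = {}" if "i < j" for i j
      using hump_sub[of i] hump_sub[of j] strict_mono_less_eq[OF bb(1), of "Suc i" j] that by fastforce
    then show ?thesis unfolding disjoint_family_on_def by (metis Int_commute linorder_neqE_nat)
  qed
  moreover have "finite (hump j)" for j using W(1) by (simp add: hump_def N_def)
  ultimately have "\<not> summable (\<lambda>n. norm (tri_apply G y n))"
    by (intro not_summable_disjoint_family) auto
  moreover have "R (Z j)" for j unfolding Z_def w_def by (rule R) (rule W(3))
  ultimately show ?thesis by (intro that[of bb Z y] bb(1,2) Z_le y)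
qed

lemma block_sequence_tendsto_0:
  fixes y :: "nat \<Rightarrow> complex" and \<beta> :: "nat \<Rightarrow> real"
  assumes bb: "strict_mono bb" "bb 0 = 0" and \<beta>: "decseq \<beta>" "\<beta> \<longlonglongrightarrow> 0" "\<And>j. 0 \<le> \<beta> j"
    and Z: "\<And>j k. norm (Z j k) \<le> 1"
    and y: "\<And>j k. bb j < k \<Longrightarrow> k \<le> bb (Suc j) \<Longrightarrow> y k = of_real (\<beta> j) * Z j k"
  shows "y \<longlonglongrightarrow> 0"
proof (rule LIMSEQ_I)
  fix \<epsilon> :: real assume "0 < \<epsilon>"
  then obtain j where j: "\<beta> j < \<epsilon>"
    using eventually_happens'[OF sequentially_bot order_tendstoD(2)[OF \<beta>(2)]] by blast
  have "norm (y k - 0) < \<epsilon>" if "Suc (bb j) \<le> k" for k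
  proof -
    from that have "0 < k" by simp
    then obtain i where i: "bb i < k" "k \<le> bb (Suc i)" by (rule block_cover[OF bb])
    have "j \<le> i" using i(2) that strict_mono_less_eq[OF bb(1), of "Suc i" j] by linarith
    have "norm (y k) = \<beta> i * norm (Z i k)" using y[OF i] \<beta>(3)[of i] by (simp add: norm_mult)
    also have "\<dots> \<le> \<beta> i" using Z[of i k] \<beta>(3)[of i] by (simp add: mult_left_le)
    also have "\<dots> \<le> \<beta> j" using \<beta>(1) \<open>j \<le> i\<close> by (simp add: decseqD)
    finally show ?thesis using j by simp
  qed
  then show "\<exists>k0. \<forall>k\<ge>k0. norm (y k - 0) < \<epsilon>" by blast
qed

lemma summable_powr_block_sequence:
  fixes y :: "nat \<Rightarrow> complex" and \<beta> :: "nat \<Rightarrow> real"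
  assumes bb: "strict_mono bb" "bb 0 = 0" "y 0 = 0" and p: "1 \<le> p"
    and \<beta>: "summable \<beta>" "\<And>j. 0 \<le> \<beta> j" "\<And>j. \<beta> j \<le> 1"
    and Z: "\<And>j. (\<Sum>k\<in>{bb j<..bb (Suc j)}. norm (Z j k) powr p) \<le> 1"
    and y: "\<And>j k. bb j < k \<Longrightarrow> k \<le> bb (Suc j) \<Longrightarrow> y k = of_real (\<beta> j) * Z j k"
  shows "summable (\<lambda>k. norm (y k) powr p)"
proof (rule summableI_nonneg_bounded)
  have block: "(\<Sum>k\<in>{bb j<..bb (Suc j)}. norm (y k) powr p) \<le> \<beta> j" for j
  proof -
    have "(\<Sum>k\<in>{bb j<..bb (Suc j)}. norm (y k) powr p) = \<beta> j powr p * (\<Sum>k\<in>{bb j<..bb (Suc j)}. norm (Z j k) powr p)"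
      unfolding sum_distrib_left
    proof (intro sum.cong refl)
      fix k assume "k \<in> {bb j<..bb (Suc j)}"
      then have "y k = of_real (\<beta> j) * Z j k" by (intro y) auto
      then show "norm (y k) powr p = \<beta> j powr p * norm (Z j k) powr p"
        using \<beta>(2)[of j] by (simp add: norm_mult powr_mult)
    qed
    also have "\<dots> \<le> \<beta> j powr p" using Z[of j] by (simp add: mult_left_le)
    also have "\<dots> \<le> \<beta> j"
      using powr_mono'[OF p \<beta>(2,3), of j] p \<beta>(2)[of j] by (cases "\<beta> j = 0") auto
    finally show ?thesis .
  qed
  have "(\<Sum>k\<le>bb m. norm (y k) powr p) \<le> (\<Sum>j<m. \<beta> j)" for m
  proof (induction m)
    case 0
    then show ?case using bb(2,3) p by simp
  next
    case (Suc m)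
    have "{..bb (Suc m)} = {..bb m} \<union> {bb m<..bb (Suc m)}"
      using strict_monoD[OF bb(1), of m "Suc m"] by auto
    then have "(\<Sum>k\<le>bb (Suc m). norm (y k) powr p)
        = (\<Sum>k\<le>bb m. norm (y k) powr p) + (\<Sum>k\<in>{bb m<..bb (Suc m)}. norm (y k) powr p)"
      by (simp only:) (rule sum.union_disjoint; auto)
    then show ?case using Suc.IH block[of m] by simp
  qed
  moreover have "(\<Sum>k<m. norm (y k) powr p) \<le> (\<Sum>k\<le>bb m. norm (y k) powr p)" for m
    using seq_suble[OF bb(1), of m] by (intro sum_mono2) auto
  moreover have "(\<Sum>j<m. \<beta> j) \<le> suminf \<beta>" for m using \<beta>(1,2) by (intro sum_le_suminf) auto
  ultimately show "(\<Sum>k<m. norm (y k) powr p) \<le> suminf \<beta>" for m by (meson order_trans)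
qed simp

theorem col_subsums_bounded_if_c0_to_ell1:
  assumes LT: "lower_triangular G"
    and c0: "\<And>y. y \<longlonglongrightarrow> 0 \<Longrightarrow> summable (\<lambda>n. norm (tri_apply G y n))"
  shows "col_subsums_bounded G"
proof (rule ccontr)
  assume unbounded: "\<not> col_subsums_bounded G"
  have summable_K: "summable (\<lambda>n. norm (\<Sum>k\<in>K. G n k))" if K: "finite K" for K
  proof -
    have "\<forall>\<^sub>F k in sequentially. (if k \<in> K then 1 else 0 :: complex) = 0"
      unfolding eventually_sequentially using K Max_ge[of "insert 0 K"]
      by (intro exI[of _ "Suc (Max (insert 0 K))"]) (auto simp: not_less_eq_eq[symmetric])
    then have "(\<lambda>k. if k \<in> K then 1 else 0 :: complex) \<longlonglongrightarrow> 0" by (rule tendsto_eventually)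
    from c0[OF this] show ?thesis by (simp add: tri_apply_indicator[OF LT K])
  qed
  have large: "\<exists>N w. finite N \<and> (\<forall>k. norm (w k) \<le> 1) \<and> True \<and> L \<le> norm (\<Sum>n\<in>N. tri_apply G w n)" for L
  proof -
    obtain K where K: "finite K" "4 * L < (\<Sum>n. norm (\<Sum>k\<in>K. G n k))"
      using unbounded summable_K unfolding col_subsums_bounded_def by (meson not_le)
    have "\<forall>\<^sub>F m in sequentially. 4 * L < (\<Sum>n<m. norm (\<Sum>k\<in>K. G n k))"
      using order_tendstoD(1)[OF summable_LIMSEQ[OF summable_K[OF K(1)]] K(2)] .
    then obtain m where m: "4 * L < (\<Sum>n<m. norm (\<Sum>k\<in>K. G n k))"
      using eventually_happens'[OF sequentially_bot] by blast
    obtain B where B: "B \<subseteq> {..<m}" "(\<Sum>n<m. norm (\<Sum>k\<in>K. G n k)) \<le> 4 * norm (\<Sum>n\<in>B. \<Sum>k\<in>K. G n k)"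
      using sum_norm_le_four_norm_subsum[of "{..<m}" "\<lambda>n. \<Sum>k\<in>K. G n k"] by auto
    then have "L \<le> norm (\<Sum>n\<in>B. tri_apply G (\<lambda>k. if k \<in> K then 1 else 0) n)"
      using m by (simp add: tri_apply_indicator[OF LT K(1)])
    then show ?thesis using B(1) finite_subset by (intro exI[of _ B] exI[of _ "\<lambda>k. if k \<in> K then 1 else 0"]) auto
  qed
  have col: "summable (\<lambda>n. norm (G n k))" for k using summable_K[of "{k}"] by simp
  define \<beta> where "\<beta> j = 1 / real (Suc j)" for j
  have \<beta>: "0 < \<beta> j" "\<beta> j \<le> 1" for j by (simp_all add: \<beta>_def)
  obtain bb Z y where y: "strict_mono bb" "bb 0 = 0" "\<And>j k. norm (Z j k) \<le> 1"
      "\<And>j k. bb j < k \<Longrightarrow> k \<le> bb (Suc j) \<Longrightarrow> y k = of_real (\<beta> j) * Z j k"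
      "\<not> summable (\<lambda>n. norm (tri_apply G y n))"
    by (rule gliding_hump[of G \<beta> "\<lambda>_. True", OF LT col \<beta>(1) \<beta>(2) _ large]) blast+
  have "decseq \<beta>" unfolding \<beta>_def by (intro decseq_SucI) (simp add: frac_le)
  moreover have "\<beta> \<longlonglongrightarrow> 0" unfolding \<beta>_def using LIMSEQ_Suc[OF lim_inverse_n'] by (simp add: inverse_eq_divide)
  ultimately have "y \<longlonglongrightarrow> 0" using y(1-4) \<beta>(1) by (intro block_sequence_tendsto_0[where bb=bb and Z=Z]) (auto intro: less_imp_le)
  then show False using c0 y(5) by blast
qed

lemma norm_powr_conjugate_factor:
  fixes c :: complex and q :: real
  assumes "1 < q"
  shows "c * (cnj c * of_real (norm c powr (q - 2))) = of_real (norm c powr q)"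
    and "norm (cnj c * of_real (norm c powr (q - 2))) = norm c powr (q - 1)"
proof -
  show "c * (cnj c * of_real (norm c powr (q - 2))) = of_real (norm c powr q)"
  proof (cases "c = 0")
    case False
    then have n: "0 < norm c" by simp
    have "c * (cnj c * of_real (norm c powr (q - 2))) = (c * cnj c) * of_real (norm c powr (q - 2))"
      by (simp add: mult.assoc)
    also have "c * cnj c = of_real ((norm c)\<^sup>2)" by (rule complex_norm_square[symmetric])
    also have "(norm c)\<^sup>2 = norm c powr 2" using powr_realpow[OF n, of 2] by simp
    also have "of_real (norm c powr 2) * of_real (norm c powr (q - 2)) = (of_real (norm c powr q) :: complex)"
      by (simp only: of_real_mult[symmetric] powr_add[symmetric]) simp
    finally show ?thesis .
  qed (use assms in simp)
  show "norm (cnj c * of_real (norm c powr (q - 2))) = norm c powr (q - 1)"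
  proof (cases "c = 0")
    case False
    then have "norm (cnj c * of_real (norm c powr (q - 2))) = norm c powr 1 * norm c powr (q - 2)"
      by (simp add: norm_mult)
    also have "\<dots> = norm c powr (q - 1)" by (simp only: powr_add[symmetric]) simp
    finally show ?thesis .
  qed (use assms in simp)
qed

text \<open>The finite-dimensional duality between \<open>\<ell>\<^sub>p\<close> and \<open>\<ell>\<^sub>q\<close>: the norming vector is
  \<open>w\<^sub>k = conj(c\<^sub>k) |c\<^sub>k|\<^bsup>q-2\<^esup> / \<parallel>c\<parallel>\<^sub>q\<^bsup>q/p\<^esup>\<close>.\<close>

lemma exists_norming_vector:
  fixes c :: "nat \<Rightarrow> complex"
  assumes p: "1 < p" and pq: "1/p + 1/q = 1" and I: "finite I"
  obtains w where "\<And>k. k \<notin> I \<Longrightarrow> w k = 0" "(\<Sum>k\<in>I. norm (w k) powr p) \<le> 1"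
    "(\<Sum>k\<in>I. w k * c k) = of_real ((\<Sum>k\<in>I. norm (c k) powr q) powr (1/q))"
proof -
  have q: "1 < q" by (rule conjugate_exponent_gt_1[OF p pq])
  define Q where "Q = (\<Sum>k\<in>I. norm (c k) powr q)"
  show ?thesis
  proof (cases "Q = 0")
    case True
    then have "c k = 0" if "k \<in> I" for k using I that q by (simp add: Q_def sum_nonneg_eq_0_iff)
    then show ?thesis using True by (intro that[of "\<lambda>_. 0"]) (simp_all add: Q_def)
  next
    case False
    then have Q: "0 < Q" by (simp add: Q_def order.not_eq_order_implies_strict sum_nonneg)
    define w where "w k = (if k \<in> I then cnj (c k) * of_real (norm (c k) powr (q - 2)) / of_real (Q powr (1/p)) else 0)" for k
    have "norm (w k) powr p = norm (c k) powr q / Q" if "k \<in> I" for k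
    proof -
      have "norm (w k) powr p = (norm (c k) powr (q - 1) / Q powr (1/p)) powr p"
        using that norm_powr_conjugate_factor(2)[OF q] by (simp add: w_def norm_divide)
      also have "\<dots> = norm (c k) powr ((q - 1) * p) / Q"
        using p Q by (simp add: powr_divide powr_powr)
      also have "(q - 1) * p = q" using p q pq by (simp add: field_simps)
      finally show ?thesis .
    qed
    then have "(\<Sum>k\<in>I. norm (w k) powr p) = (\<Sum>k\<in>I. norm (c k) powr q / Q)" by simp
    also have "\<dots> = 1" using Q by (simp add: sum_divide_distrib[symmetric] Q_def[symmetric])
    finally have w_ellp: "(\<Sum>k\<in>I. norm (w k) powr p) = 1" .
    have "(\<Sum>k\<in>I. w k * c k) = of_real (Q / Q powr (1/p))"
      using norm_powr_conjugate_factor(1)[OF q]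
      by (simp add: w_def sum_divide_distrib mult.commute Q_def)
    also have "Q / Q powr (1/p) = Q powr (1 - 1/p)" using Q by (simp add: powr_diff)
    also have "1 - 1/p = 1/q" using pq by simp
    finally have "(\<Sum>k\<in>I. w k * c k) = of_real (Q powr (1/q))" .
    then show ?thesis using w_ellp by (intro that[of w]) (simp_all only: Q_def w_def order_refl, simp)
  qed
qed

definition ellp_ball :: "real \<Rightarrow> (nat \<Rightarrow> complex) \<Rightarrow> bool" where
  "ellp_ball p w \<longleftrightarrow> (\<forall>A. finite A \<longrightarrow> (\<Sum>k\<in>A. norm (w k) powr p) \<le> 1)"

lemma ellp_ball_restrict:
  assumes "ellp_ball p w"
  shows "ellp_ball p (\<lambda>k. if b < k then w k else 0)"
  unfolding ellp_ball_def
proof (intro allI impI)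
  fix A :: "nat set" assume "finite A"
  have "(\<Sum>k\<in>A. norm (if b < k then w k else 0) powr p) \<le> (\<Sum>k\<in>A. norm (w k) powr p)"
    by (intro sum_mono) auto
  also have "\<dots> \<le> 1" using assms \<open>finite A\<close> by (simp add: ellp_ball_def)
  finally show "(\<Sum>k\<in>A. norm (if b < k then w k else 0) powr p) \<le> 1" .
qed

lemma norm_le_1_if_ellp_ball:
  assumes "ellp_ball p w" "0 < p"
  shows "norm (w k) \<le> 1"
proof (rule ccontr)
  assume "\<not> norm (w k) \<le> 1"
  then have "1 powr p < norm (w k) powr p" using assms(2) by (intro powr_less_mono2) auto
  moreover have "norm (w k) powr p \<le> 1" using assms(1)[unfolded ellp_ball_def, rule_format, of "{k}"] by simp
  ultimately show False by simp
qed

lemma exists_ellp_ball_with_large_image: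
  assumes LT: "lower_triangular G" and p: "1 < p" and pq: "1/p + 1/q = 1" and N: "finite N"
    and L: "0 \<le> L" "L powr q < (\<Sum>k. norm (\<Sum>n\<in>N. G n k) powr q)"
  obtains w where "ellp_ball p w" "L \<le> norm (\<Sum>n\<in>N. tri_apply G w n)"
proof -
  have q: "1 < q" by (rule conjugate_exponent_gt_1[OF p pq])
  define e where "e = Max (insert 0 N)"
  have Ne: "N \<subseteq> {..e}" using N by (auto simp: e_def)
  define Q where "Q = (\<Sum>k\<le>e. norm (\<Sum>n\<in>N. G n k) powr q)"
  have "(\<Sum>k. norm (\<Sum>n\<in>N. G n k) powr q) = Q"
    unfolding Q_def by (rule suminf_finite) (use sum_column_eq_0[OF LT Ne] q in auto)
  obtain w where w: "\<And>k. k \<notin> {..e} \<Longrightarrow> w k = 0" "(\<Sum>k\<le>e. norm (w k) powr p) \<le> 1"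
      "(\<Sum>k\<le>e. w k * (\<Sum>n\<in>N. G n k)) = of_real (Q powr (1/q))"
    using exists_norming_vector[OF p pq, of "{..e}" "\<lambda>k. \<Sum>n\<in>N. G n k"] by (auto simp: Q_def)
  have "ellp_ball p w"
    unfolding ellp_ball_def
  proof (intro allI impI)
    fix A :: "nat set" assume "finite A"
    then have "(\<Sum>k\<in>A. norm (w k) powr p) \<le> (\<Sum>k\<in>A \<union> {..e}. norm (w k) powr p)"
      by (intro sum_mono2) auto
    also have "\<dots> = (\<Sum>k\<le>e. norm (w k) powr p)"
      using \<open>finite A\<close> w(1) p by (intro sum.mono_neutral_right) auto
    finally show "(\<Sum>k\<in>A. norm (w k) powr p) \<le> 1" using w(2) by simp
  qed
  moreover have "(\<Sum>n\<in>N. tri_apply G w n) = of_real (Q powr (1/q))"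
    using sum_tri_apply_swap[OF LT Ne] w(3) by simp
  moreover have "L \<le> Q powr (1/q)"
  proof -
    have "(L powr q) powr (1/q) \<le> Q powr (1/q)"
      using L \<open>(\<Sum>k. norm (\<Sum>n\<in>N. G n k) powr q) = Q\<close> q by (intro powr_mono2) auto
    then show ?thesis using L(1) q by (simp add: powr_powr)
  qed
  ultimately show ?thesis using that[of w] by (simp add: Q_def)
qed

theorem row_subsums_bounded_if_ellp_to_ell1:
  assumes LT: "lower_triangular G" and p: "1 < p" and pq: "1/p + 1/q = 1"
    and ellp: "\<And>y. summable (\<lambda>k. norm (y k) powr p) \<Longrightarrow> summable (\<lambda>n. norm (tri_apply G y n))"
  shows "row_subsums_bounded q G"
proof (rule ccontr)
  assume unbounded: "\<not> row_subsums_bounded q G"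
  have summable_N: "summable (\<lambda>k. norm (\<Sum>n\<in>N. G n k) powr q)" if "finite N" for N
  proof (rule summable_finite[of "{..Max (insert 0 N)}"])
    have "N \<subseteq> {..Max (insert 0 N)}" using \<open>finite N\<close> by auto
    then show "norm (\<Sum>n\<in>N. G n k) powr q = 0" if "k \<notin> {..Max (insert 0 N)}" for k
      using sum_column_eq_0[OF LT] that by auto
  qed simp
  have col: "summable (\<lambda>n. norm (G n k))" for k
  proof -
    have "summable (\<lambda>j. norm (if j \<in> {k} then 1 else 0 :: complex) powr p)"
      by (rule summable_finite[of "{k}"]) auto
    from ellp[OF this] show ?thesis using tri_apply_indicator[OF LT, of "{k}"] by simp
  qed
  have large: "\<exists>N w. finite N \<and> (\<forall>k. norm (w k) \<le> 1) \<and> ellp_ball p w \<and> L \<le> norm (\<Sum>n\<in>N. tri_apply G w n)" for L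
  proof -
    obtain N where N: "finite N" "max L 0 powr q < (\<Sum>k. norm (\<Sum>n\<in>N. G n k) powr q)"
      using unbounded summable_N unfolding row_subsums_bounded_def by (meson not_le)
    then obtain w where w: "ellp_ball p w" "max L 0 \<le> norm (\<Sum>n\<in>N. tri_apply G w n)"
      using exists_ellp_ball_with_large_image[OF LT p pq N(1) _ N(2)] by auto
    have "norm (w k) \<le> 1" for k using norm_le_1_if_ellp_ball[OF w(1)] p by simp
    then show ?thesis using N(1) w by (intro exI[of _ N] exI[of _ w]) auto
  qed
  define \<beta> where "\<beta> j = (1/2::real) ^ j" for j
  have \<beta>: "0 < \<beta> j" "\<beta> j \<le> 1" for j by (auto simp: \<beta>_def power_le_one)
  obtain bb Z y where y: "strict_mono bb" "bb 0 = 0" "\<And>j. ellp_ball p (Z j)" "\<And>j k. norm (Z j k) \<le> 1"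
      "y 0 = 0" "\<And>j k. bb j < k \<Longrightarrow> k \<le> bb (Suc j) \<Longrightarrow> y k = of_real (\<beta> j) * Z j k"
      "\<not> summable (\<lambda>n. norm (tri_apply G y n))"
    using gliding_hump[of G \<beta> "ellp_ball p", OF LT col \<beta>(1) \<beta>(2) ellp_ball_restrict large] by blast
  have "(\<Sum>k\<in>{bb j<..bb (Suc j)}. norm (Z j k) powr p) \<le> 1" for j
    using y(3)[of j] by (simp add: ellp_ball_def)
  moreover have "summable \<beta>" unfolding \<beta>_def by (rule summable_geometric) simp
  ultimately have "summable (\<lambda>k. norm (y k) powr p)"
    using y(1,2,5,6) \<beta> p by (intro summable_powr_block_sequence[where bb=bb and Z=Z]) (auto intro: less_imp_le)
  then show False using ellp y(7) by blast
qed

section \<open>Inverting \<open>What\<close>\<close>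

text \<open>\<open>rho1\<close> and \<open>rho2\<close> are the roots of \<open>r x\<^sup>2 + s x + t\<close>, so \<open>dseq\<close> satisfies the
  recurrence of \<open>B(r,s,t)\<close>.\<close>

definition dseq :: "real \<Rightarrow> real \<Rightarrow> real \<Rightarrow> nat \<Rightarrow> complex" where
  "dseq r s t m = (\<Sum>v=0..m. rho1 r s t ^ (m - v) * rho2 r s t ^ v)"

lemma dmat_eq_dseq: "dmat r s t n k = (if k \<le> n then dseq r s t (n - k) / of_real r else 0)"
  by (simp add: dmat_def dseq_def)

lemma dmat_eq_0: "n < k \<Longrightarrow> dmat r s t n k = 0"
  by (simp add: dmat_def)

lemma dseq_0: "dseq r s t 0 = 1" by (simp add: dseq_def)

lemma dseq_Suc: "dseq r s t (Suc m) = rho2 r s t ^ Suc m + rho1 r s t * dseq r s t m"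
proof -
  have "(\<Sum>v=0..m. rho1 r s t ^ (Suc m - v) * rho2 r s t ^ v) = rho1 r s t * dseq r s t m"
    unfolding dseq_def sum_distrib_left by (intro sum.cong refl) (simp add: Suc_diff_le)
  then show ?thesis by (simp add: dseq_def)
qed

lemma rho1_plus_rho2: "r \<noteq> 0 \<Longrightarrow> rho1 r s t + rho2 r s t = - of_real s / of_real r"
  by (simp add: rho1_def rho2_def field_simps)

lemma rho1_times_rho2:
  assumes "r \<noteq> 0"
  shows "rho1 r s t * rho2 r s t = of_real t / of_real r"
proof -
  define C where "C = csqrt (complex_of_real (s\<^sup>2 - 4*t*r))"
  have C2: "C\<^sup>2 = of_real s ^ 2 - 4 * of_real t * of_real r" by (simp add: C_def)
  have "rho1 r s t * rho2 r s t = (of_real s ^ 2 - C\<^sup>2) / (4 * of_real r ^ 2)"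
    unfolding rho1_def rho2_def C_def[symmetric] using assms by (simp add: field_simps power2_eq_square)
  also have "\<dots> = of_real t / of_real r"
    unfolding C2 using assms by (simp add: field_simps power2_eq_square)
  finally show ?thesis .
qed

lemma dseq_rec:
  assumes r: "r \<noteq> 0"
  shows "of_real r * dseq r s t (Suc (Suc m)) + of_real s * dseq r s t (Suc m) + of_real t * dseq r s t m = 0"
proof -
  let ?a = "rho1 r s t" and ?b = "rho2 r s t"
  have e2: "dseq r s t (Suc (Suc m)) = (?a + ?b) * dseq r s t (Suc m) - ?a * ?b * dseq r s t m"
    by (simp add: dseq_Suc algebra_simps)
  show ?thesis unfolding e2 rho1_plus_rho2[OF r] rho1_times_rho2[OF r] using r by (simp add: field_simps)
qed

lemma dseq_1: "r \<noteq> 0 \<Longrightarrow> of_real r * dseq r s t 1 + of_real s = 0"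
  using rho1_plus_rho2[of r s t] by (simp add: dseq_Suc dseq_0 field_simps)

lemma dmat_band_recurrence:
  assumes r: "r \<noteq> 0" and kn: "k \<le> n"
  shows "of_real r * dmat r s t n k + of_real s * (if 1 \<le> n then dmat r s t (n - 1) k else 0)
         + of_real t * (if 2 \<le> n then dmat r s t (n - 2) k else 0) = (if k = n then 1 else 0)"
proof -
  obtain m where n: "n = k + m" using kn le_Suc_ex by blast
  have rc: "(of_real r :: complex) \<noteq> 0" using r by simp
  show ?thesis
  proof (cases m)
    case 0
    then have "n = k" using n by simp
    then show ?thesis using rc by (auto simp: dmat_eq_dseq dseq_0)
  next
    case (Suc m')
    show ?thesis
    proof (cases m')
      case 0
      then have nk: "n = Suc k" using n Suc by simp
      have "of_real r * (dseq r s t 1 / of_real r) + of_real s * (1 / of_real r) = (of_real r * dseq r s t 1 + of_real s) / (of_real r :: complex)"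
        using rc by (simp add: add_divide_distrib)
      also have "\<dots> = 0" using dseq_1[OF r, of s t] by simp
      finally have *: "of_real r * (dseq r s t 1 / of_real r) + of_real s * (1 / of_real r) = (0::complex)" .
      show ?thesis using * r unfolding nk by (auto simp: dmat_eq_dseq dseq_0)
    next
      case (Suc m'')
      have nk: "n = Suc (Suc (k + m''))" using n \<open>m = Suc m'\<close> Suc by simp
      have "of_real r * (dseq r s t (Suc (Suc m'')) / of_real r) + of_real s * (dseq r s t (Suc m'') / of_real r)
          + of_real t * (dseq r s t m'' / of_real r)
          = (of_real r * dseq r s t (Suc (Suc m'')) + of_real s * dseq r s t (Suc m'') + of_real t * dseq r s t m'') / (of_real r :: complex)"
        using rc by (simp add: add_divide_distrib)
      also have "\<dots> = 0" using dseq_rec[OF r, of s t m''] by simp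
      finally have *: "of_real r * (dseq r s t (Suc (Suc m'')) / of_real r) + of_real s * (dseq r s t (Suc m'') / of_real r)
          + of_real t * (dseq r s t m'' / of_real r) = (0::complex)" .
      have d: "n - k = Suc (Suc m'')" "n - 1 - k = Suc m''" "n - 2 - k = m''" using nk by auto
      show ?thesis using * d nk by (simp add: dmat_eq_dseq)
    qed
  qed
qed

text \<open>In the paper's notation \<open>band_op\<close> is \<open>B(r,s,t)\<close>, \<open>band_inv\<close> is \<open>D\<close> and \<open>wmean\<close> is the
  \<open>\<lambda>\<close>-weighted mean.\<close>

definition band_op :: "real \<Rightarrow> real \<Rightarrow> real \<Rightarrow> (nat \<Rightarrow> complex) \<Rightarrow> nat \<Rightarrow> complex" where
  "band_op r s t x k = of_real r * x k + of_real s * shift x 1 k + of_real t * shift x 2 k"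

definition band_inv :: "real \<Rightarrow> real \<Rightarrow> real \<Rightarrow> (nat \<Rightarrow> complex) \<Rightarrow> nat \<Rightarrow> complex" where
  "band_inv r s t u n = (\<Sum>k\<le>n. dmat r s t n k * u k)"

lemma band_inv_eq_sum_atMost: "j \<le> n \<Longrightarrow> band_inv r s t u j = (\<Sum>k\<le>n. dmat r s t j k * u k)"
  unfolding band_inv_def by (intro sum.mono_neutral_left) (auto simp: dmat_eq_0)

lemma band_op_band_inv:
  assumes r: "r \<noteq> 0"
  shows "band_op r s t (band_inv r s t u) = u"
proof
  fix n
  have s1: "shift (band_inv r s t u) 1 n = (\<Sum>k\<le>n. (if 1 \<le> n then dmat r s t (n - 1) k else 0) * u k)"
    by (simp add: shift_def band_inv_eq_sum_atMost)
  have s2: "shift (band_inv r s t u) 2 n = (\<Sum>k\<le>n. (if 2 \<le> n then dmat r s t (n - 2) k else 0) * u k)"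
    by (simp add: shift_def band_inv_eq_sum_atMost)
  have "band_op r s t (band_inv r s t u) n = (\<Sum>k\<le>n. (of_real r * dmat r s t n k
      + of_real s * (if 1 \<le> n then dmat r s t (n - 1) k else 0)
      + of_real t * (if 2 \<le> n then dmat r s t (n - 2) k else 0)) * u k)"
    unfolding band_op_def s1 s2 by (simp add: band_inv_def sum_distrib_left sum.distrib algebra_simps)
  also have "\<dots> = (\<Sum>k\<le>n. (if k = n then 1 else 0) * u k)"
    by (intro sum.cong refl) (subst dmat_band_recurrence[OF r], auto)
  also have "\<dots> = (\<Sum>k\<le>n. if k = n then u k else 0)" by (intro sum.cong) auto
  finally show "band_op r s t (band_inv r s t u) n = u n" by simp
qed

lemma band_op_inj:
  assumes "r \<noteq> 0" "band_op r s t x = band_op r s t x'"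
  shows "x = x'"
proof
  fix n show "x n = x' n"
  proof (induction n rule: less_induct)
    case (less n)
    then have "shift x 1 n = shift x' 1 n" "shift x 2 n = shift x' 2 n" by (auto simp: shift_def)
    then show ?case using fun_cong[OF assms(2), of n] assms(1) by (simp add: band_op_def)
  qed
qed

definition lam_diff :: "(nat \<Rightarrow> real) \<Rightarrow> nat \<Rightarrow> real" where
  "lam_diff lam k = lam k - lam_prev lam k"

definition wmean :: "(nat \<Rightarrow> real) \<Rightarrow> (nat \<Rightarrow> complex) \<Rightarrow> nat \<Rightarrow> complex" where
  "wmean lam z n = of_real (1 / lam n) * (\<Sum>k\<le>n. of_real (lam_diff lam k) * z k)"

definition wmean_inv :: "(nat \<Rightarrow> real) \<Rightarrow> (nat \<Rightarrow> complex) \<Rightarrow> nat \<Rightarrow> complex" where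
  "wmean_inv lam y k = (of_real (lam k) * y k - of_real (lam_prev lam k) * shift y 1 k) / of_real (lam_diff lam k)"

lemma lam_prev_0: "lam_prev lam 0 = 0" by (simp add: lam_prev_def shift_def)
lemma lam_prev_Suc: "lam_prev lam (Suc k) = lam k" by (simp add: lam_prev_def shift_def)
lemma shift_1_0: "shift y (Suc 0) 0 = 0" by (simp add: shift_def)
lemma shift_1_Suc: "shift y (Suc 0) (Suc k) = y k" by (simp add: shift_def)

lemma What_eq_wmean_band_op: "What r s t lam x = wmean lam (band_op r s t x)"
  by (simp add: fun_eq_iff What_def wmean_def band_op_def lam_diff_def atLeast0AtMost)

lemma fmat_eq_mult: "fmat r s t lam a n k = fmat r s t lam (\<lambda>_. 1) n k * a n"
  by (simp add: fmat_def)

lemma tri_apply_fmat: "tri_apply (fmat r s t lam a) y n = a n * tri_apply (fmat r s t lam (\<lambda>_. 1)) y n"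
  unfolding tri_apply_def by (subst fmat_eq_mult) (simp add: sum_distrib_left mult_ac)

lemma lower_triangular_fmat: "lower_triangular (fmat r s t lam a)"
  by (simp add: lower_triangular_def fmat_def)

context
  fixes lam :: "nat \<Rightarrow> real"
  assumes lam_pos: "\<forall>k. 0 < lam k" and lam_mono: "strict_mono lam"
begin

lemma lam_diff_pos: "0 < lam_diff lam k"
  using lam_pos lam_mono by (cases k) (simp_all add: lam_diff_def lam_prev_0 lam_prev_Suc strict_mono_def)

lemma wmean_wmean_inv: "wmean lam (wmean_inv lam y) = y"
proof
  fix n
  have "(\<Sum>k\<le>n. of_real (lam_diff lam k) * wmean_inv lam y k)
      = (\<Sum>k\<le>n. of_real (lam k) * y k - of_real (lam_prev lam k) * shift y 1 k)"
    using lam_diff_pos by (intro sum.cong refl) (simp add: wmean_inv_def less_imp_neq[symmetric])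
  also have "\<dots> = of_real (lam n) * y n"
    by (induction n) (simp_all add: lam_prev_0 lam_prev_Suc shift_1_0 shift_1_Suc)
  finally show "wmean lam (wmean_inv lam y) n = y n"
    using lam_pos by (simp add: wmean_def less_imp_neq[symmetric])
qed

lemma wmean_inj:
  assumes "wmean lam z = wmean lam z'"
  shows "z = z'"
proof -
  have partial: "(\<Sum>k\<le>n. of_real (lam_diff lam k) * z k) = (\<Sum>k\<le>n. of_real (lam_diff lam k) * z' k)" for n
    using fun_cong[OF assms, of n] lam_pos by (simp add: wmean_def less_imp_neq[symmetric])
  show ?thesis
  proof
    fix n
    have "of_real (lam_diff lam n) * z n = of_real (lam_diff lam n) * z' n"
      using partial[of n] partial[of "n - 1"] by (cases n) simp_all
    then show "z n = z' n" using lam_diff_pos[of n] by simp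
  qed
qed

text \<open>The second term of \<open>wmean_inv\<close> involves \<open>y\<^sub>k\<^sub>-\<^sub>1\<close>; reindexing it, the coefficient of
  \<open>y\<^sub>k\<close> becomes exactly the entry of \<open>F\<^sup>\<lambda>\<close> with \<open>a = 1\<close>.\<close>

lemma band_inv_wmean_inv: "band_inv r s t (wmean_inv lam y) n = tri_apply (fmat r s t lam (\<lambda>_. 1)) y n"
proof -
  define h where "h k = dmat r s t n k * of_real (lam_prev lam k / lam_diff lam k) * shift y 1 k" for k
  have "band_inv r s t (wmean_inv lam y) n
      = (\<Sum>k\<le>n. dmat r s t n k * of_real (lam k / lam_diff lam k) * y k) - (\<Sum>k\<le>n. h k)"
    unfolding band_inv_def h_def wmean_inv_def sum_subtractf[symmetric]
    by (intro sum.cong refl) (simp add: diff_divide_distrib algebra_simps)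
  also have "(\<Sum>k\<le>n. h k) = (\<Sum>k\<le>n. h (Suc k))"
  proof -
    have "h 0 = 0" "h (Suc n) = 0" by (simp_all add: h_def shift_1_0 dmat_eq_0)
    then show ?thesis using sum.atMost_Suc_shift[of h n] by simp
  qed
  also have "(\<Sum>k\<le>n. h (Suc k)) = (\<Sum>k\<le>n. dmat r s t n (Suc k) * of_real (lam k / lam_diff lam (Suc k)) * y k)"
    by (simp add: h_def lam_prev_Suc shift_1_Suc)
  also have "(\<Sum>k\<le>n. dmat r s t n k * of_real (lam k / lam_diff lam k) * y k) - \<dots>
      = (\<Sum>k\<le>n. (dmat r s t n k * of_real (lam k / lam_diff lam k)
          - dmat r s t n (Suc k) * of_real (lam k / lam_diff lam (Suc k))) * y k)"
    by (simp add: sum_subtractf[symmetric] algebra_simps)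
  also have "\<dots> = tri_apply (fmat r s t lam (\<lambda>_. 1)) y n"
    unfolding tri_apply_def
  proof (intro sum.cong refl)
    fix k assume "k \<in> {..n}"
    then consider "k < n" | "k = n" by fastforce
    then show "(dmat r s t n k * of_real (lam k / lam_diff lam k)
        - dmat r s t n (Suc k) * of_real (lam k / lam_diff lam (Suc k))) * y k
        = fmat r s t lam (\<lambda>_. 1) n k * y k"
      by cases (simp add: fmat_def lam_diff_def lam_prev_Suc, simp add: fmat_def lam_diff_def dmat_def)
  qed
  finally show ?thesis .
qed

context
  fixes r s t :: real
  assumes r: "r \<noteq> 0"
begin

lemma What_tri_apply_fmat: "What r s t lam (tri_apply (fmat r s t lam (\<lambda>_. 1)) y) = y"
proof -
  have "tri_apply (fmat r s t lam (\<lambda>_. 1)) y = band_inv r s t (wmean_inv lam y)"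
    by (simp add: fun_eq_iff band_inv_wmean_inv)
  then show ?thesis by (simp add: What_eq_wmean_band_op band_op_band_inv[OF r] wmean_wmean_inv)
qed

lemma What_inj: "inj (What r s t lam)"
proof (rule injI)
  fix x x' assume "What r s t lam x = What r s t lam x'"
  then have "wmean lam (band_op r s t x) = wmean lam (band_op r s t x')" by (simp only: What_eq_wmean_band_op)
  then have "band_op r s t x = band_op r s t x'" by (rule wmean_inj)
  then show "x = x'" by (rule band_op_inj[OF r])
qed

lemma tri_apply_fmat_What: "tri_apply (fmat r s t lam a) (What r s t lam x) n = a n * x n"
proof -
  have "tri_apply (fmat r s t lam (\<lambda>_. 1)) (What r s t lam x) = x"
    using What_tri_apply_fmat by (rule injD[OF What_inj])
  then show ?thesis by (simp only: tri_apply_fmat[of r s t lam a])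
qed

lemma alpha_dual_What_preimage:
  "alpha_dual {x. P (What r s t lam x)} = {a. \<forall>y. P y \<longrightarrow> summable (\<lambda>n. norm (tri_apply (fmat r s t lam a) y n))}"
proof (intro equalityI subsetI CollectI allI impI)
  fix a y assume a: "a \<in> alpha_dual {x. P (What r s t lam x)}" and "P y"
  from a have "\<forall>x\<in>{x. P (What r s t lam x)}. summable (\<lambda>k. norm (a k * x k))"
    unfolding alpha_dual_def by (rule CollectD)
  moreover have "tri_apply (fmat r s t lam (\<lambda>_. 1)) y \<in> {x. P (What r s t lam x)}"
    using \<open>P y\<close> by (simp add: What_tri_apply_fmat)
  ultimately have "summable (\<lambda>n. norm (a n * tri_apply (fmat r s t lam (\<lambda>_. 1)) y n))"
    by (rule bspec)
  then show "summable (\<lambda>n. norm (tri_apply (fmat r s t lam a) y n))" by (simp only: tri_apply_fmat[of r s t lam a])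
next
  fix a assume a: "a \<in> {a. \<forall>y. P y \<longrightarrow> summable (\<lambda>n. norm (tri_apply (fmat r s t lam a) y n))}"
  show "a \<in> alpha_dual {x. P (What r s t lam x)}"
    unfolding alpha_dual_def
  proof (intro CollectI ballI)
    fix x assume "x \<in> {x. P (What r s t lam x)}"
    then have "summable (\<lambda>n. norm (tri_apply (fmat r s t lam a) (What r s t lam x) n))" using a by simp
    then show "summable (\<lambda>k. norm (a k * x k))" by (simp only: tri_apply_fmat_What)
  qed
qed

end

end

section \<open>The \<open>\<alpha>\<close>-duals\<close>

theorem theorem8:
  fixes r s t :: real and lam :: "nat \<Rightarrow> real"
  assumes "r \<noteq> 0" and "s \<noteq> 0" and "t \<noteq> 0"
    and "strict_mono lam" and "\<forall>k. 0 < lam k"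
    and "filterlim lam at_top sequentially"
  shows "alpha_dual (c0_lam r s t lam) = f1_lam r s t lam
       \<and> alpha_dual (c_lam r s t lam) = f1_lam r s t lam
       \<and> alpha_dual (linf_lam r s t lam) = f1_lam r s t lam
       \<and> (\<forall>p q. 1 < p \<and> 1/p + 1/q = 1 \<longrightarrow>
            alpha_dual (lp_lam p r s t lam) = f6_lam q r s t lam)"
proof -
  define S where "S P = {a. \<forall>y. P y \<longrightarrow> summable (\<lambda>n. norm (tri_apply (fmat r s t lam a) y n))}" for P
  have dual: "alpha_dual {x. P (What r s t lam x)} = S P" for P
    unfolding S_def by (rule alpha_dual_What_preimage[OF assms(5,4,1)])
  have f1: "f1_lam r s t lam = {a. col_subsums_bounded (fmat r s t lam a)}"
    by (simp add: f1_lam_def col_subsums_bounded_def)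
  have f6: "f6_lam q r s t lam = {a. row_subsums_bounded q (fmat r s t lam a)}" for q
    by (simp add: f6_lam_def row_subsums_bounded_def)
  have "S (\<lambda>y. y \<longlonglongrightarrow> 0) \<subseteq> f1_lam r s t lam" "f1_lam r s t lam \<subseteq> S Bseq"
    using col_subsums_bounded_if_c0_to_ell1 summable_tri_apply_if_col_subsums_bounded
    by (auto simp: S_def f1 lower_triangular_fmat)
  moreover have "S Bseq \<subseteq> S convergent" "S convergent \<subseteq> S (\<lambda>y. y \<longlonglongrightarrow> 0)"
    unfolding S_def using convergent_imp_Bseq convergentI by blast+
  moreover have "S (\<lambda>y. summable (\<lambda>n. norm (y n) powr p)) = f6_lam q r s t lam" if "1 < p" "1/p + 1/q = 1" for p q
    using row_subsums_bounded_if_ellp_to_ell1 summable_tri_apply_if_row_subsums_bounded that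
    by (auto simp: S_def f6 lower_triangular_fmat)
  ultimately show ?thesis
    using dual[of "\<lambda>y. y \<longlonglongrightarrow> 0"] dual[of convergent] dual[of Bseq] dual[of "\<lambda>y. summable (\<lambda>n. norm (y n) powr _)"]
    by (auto simp: c0_lam_def c_lam_def linf_lam_def lp_lam_def)
qed

end
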